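(* Let $q\ge 3$ and let $n$ be a positive even integer. There exists a quasi-complementary Lee metric Gray code of $q$-ary $n$-tuples.
   Context: Lee distance between $v,u\in\mathbb{Z}_q^n$ is $\sum_{i}\min\{|v_i-u_i|,q-|v_i-u_i|\}$ (entries regarded as integers in $\{0,\ldots,q-1\}$). A quasi-complementary Lee metric Gray code of $q$-ary $n$-tuples is an ordering $G(0),\ldots,G(q^n-1)$ of all words of $\mathbb{Z}_q^n$ such that consecutive words $G(i),G(i+1)$ ($0\le i<q^n-1$) have Lee distance $1$ and $G((i+q^{n-1})\bmod q^n)=G(i)+(1,1,\ldots,1)$ for all $i$, with addition in $\mathbb{Z}_q^n$. *)

theory Defs
  imports Main
begin

text \<open>Words of Z_q^n are represented as functions nat => nat with entries in {0..<q}
  at positions i < n and value 0 at positions i >= n.\<close>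

definition words :: "nat \<Rightarrow> nat \<Rightarrow> (nat \<Rightarrow> nat) set" where
  "words q n = {v. (\<forall>i<n. v i < q) \<and> (\<forall>i\<ge>n. v i = 0)}"

definition lee_coord :: "nat \<Rightarrow> nat \<Rightarrow> nat \<Rightarrow> nat" where
  "lee_coord q a b = (let d = (if a \<ge> b then a - b else b - a) in min d (q - d))"

definition lee_dist :: "nat \<Rightarrow> nat \<Rightarrow> (nat \<Rightarrow> nat) \<Rightarrow> (nat \<Rightarrow> nat) \<Rightarrow> nat" where
  "lee_dist q n v u = (\<Sum>i<n. lee_coord q (v i) (u i))"

definition add_ones :: "nat \<Rightarrow> nat \<Rightarrow> (nat \<Rightarrow> nat) \<Rightarrow> (nat \<Rightarrow> nat)" where
  "add_ones q n v = (\<lambda>i. if i < n then (v i + 1) mod q else 0)"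

definition quasi_complementary_lee_gray_code ::
  "nat \<Rightarrow> nat \<Rightarrow> (nat \<Rightarrow> nat \<Rightarrow> nat) \<Rightarrow> bool" where
  "quasi_complementary_lee_gray_code q n G \<longleftrightarrow>
     bij_betw G {..<q ^ n} (words q n) \<and>
     (\<forall>i. i + 1 < q ^ n \<longrightarrow> lee_dist q n (G i) (G (i + 1)) = 1) \<and>
     (\<forall>i<q ^ n. G ((i + q ^ (n - 1)) mod q ^ n) = add_ones q n (G i))"

end

theory Submission
  imports Defs "HOL-Library.Product_Plus"
begin

text \<open>A quasi-complementary code for Z_q^(n+2) is built from one for Z_q^n, say G, in blocks:
  word q^2 i + s is G i followed by the s-th point of a Lee Gray walk through Z_q^2. Within a
  block only the last two coordinates move and between blocks only G moves. The walk of block i is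
  the snake q a + b \<mapsto> (a, a - b), turned by a quarter when q^(n-1) divides i + 1 and translated
  by an offset depending on i. The offsets make consecutive blocks join up and grow by
  (1, 1) when i grows by q^(n-1), which together with the quasi-complementarity of G gives that
  of the new code. The snake alone is a quasi-complementary code for n = 2.\<close>

section \<open>Block codes\<close>

lemma add_mult_mod_mult_eq:
  fixes a b c k :: nat
  assumes "0 < b"
  shows "(a + b * k) mod (b * c) = b * ((a div b + k) mod c) + a mod b"
  using assms by (simp add: mod_mult2_eq add.commute)

lemma words_0: "words q 0 = {\<lambda>_. 0}"
  unfolding words_def by auto

lemma words_Suc: "words q (Suc n) = (\<lambda>(v, a). v(n := a)) ` (words q n \<times> {..<q})"
proof
  show "words q (Suc n) \<subseteq> (\<lambda>(v, a). v(n := a)) ` (words q n \<times> {..<q})"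
  proof
    fix w
    assume w: "w \<in> words q (Suc n)"
    then have "(w(n := 0), w n) \<in> words q n \<times> {..<q}"
      unfolding words_def by auto
    moreover have "w = (\<lambda>(v, a). v(n := a)) (w(n := 0), w n)"
      by simp
    ultimately show "w \<in> (\<lambda>(v, a). v(n := a)) ` (words q n \<times> {..<q})"
      by blast
  qed
qed (auto simp: words_def)

lemma inj_on_words_Suc: "inj_on (\<lambda>(v, a). v(n := a)) (words q n \<times> {..<q})"
  by (rule inj_on_inverseI[where g = "\<lambda>w. (w(n := 0), w n)"]) (auto simp: words_def fun_eq_iff)

lemma finite_words: "finite (words q n)"
proof (induction n)
  case 0
  show ?case
    by (simp add: words_0)
next
  case (Suc n)
  then show ?case
    unfolding words_Suc by simp
qed

lemma card_words: "card (words q n) = q ^ n"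
proof (induction n)
  case 0
  show ?case
    by (simp add: words_0)
next
  case (Suc n)
  then show ?case
    unfolding words_Suc card_image[OF inj_on_words_Suc] by (simp add: card_cartesian_product)
qed

lemma quasi_complementary_lee_gray_codeI:
  assumes words: "\<And>j. j < q ^ n \<Longrightarrow> G j \<in> words q n"
    and inj: "inj_on G {..<q ^ n}"
    and step: "\<And>j. Suc j < q ^ n \<Longrightarrow> lee_dist q n (G j) (G (Suc j)) = 1"
    and shift: "\<And>j. j < q ^ n \<Longrightarrow> G ((j + q ^ (n - 1)) mod q ^ n) = add_ones q n (G j)"
  shows "quasi_complementary_lee_gray_code q n G"
proof -
  have "G ` {..<q ^ n} \<subseteq> words q n"
    using words by auto
  moreover have "card (G ` {..<q ^ n}) = card (words q n)"
    using card_image[OF inj] by (simp add: card_words)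
  ultimately have "G ` {..<q ^ n} = words q n"
    using finite_words by (simp add: card_subset_eq)
  with inj step shift show ?thesis
    unfolding quasi_complementary_lee_gray_code_def bij_betw_def by simp
qed

definition append_word :: "nat \<Rightarrow> (nat \<Rightarrow> nat) \<Rightarrow> (nat \<Rightarrow> nat) \<Rightarrow> nat \<Rightarrow> nat" where
  "append_word n v w p = (if p < n then v p else w (p - n))"

lemma append_word_in_words:
  "v \<in> words q n \<Longrightarrow> w \<in> words q m \<Longrightarrow> append_word n v w \<in> words q (n + m)"
  unfolding words_def append_word_def by auto

lemma append_word_inject:
  assumes v: "v \<in> words q n" "v' \<in> words q n" and eq: "append_word n v w = append_word n v' w'"
  shows "v = v' \<and> w = w'"
proof (intro conjI ext)
  fix p
  show "v p = v' p"
    using v fun_cong[OF eq, of p] unfolding words_def append_word_def by (cases "p < n") auto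
  show "w p = w' p"
    using fun_cong[OF eq, of "n + p"] unfolding append_word_def by simp
qed

lemma lee_coord_self [simp]: "lee_coord q a a = 0"
  unfolding lee_coord_def by simp

lemma lee_dist_self [simp]: "lee_dist q n v v = 0"
  unfolding lee_dist_def by simp

lemma lee_dist_append_word:
  "lee_dist q (n + m) (append_word n v w) (append_word n v' w') = lee_dist q n v v' + lee_dist q m w w'"
proof (induction m)
  case 0
  show ?case
    unfolding lee_dist_def append_word_def by (auto intro: sum.cong)
next
  case (Suc m)
  then show ?case
    unfolding lee_dist_def by (simp add: append_word_def)
qed

lemma add_ones_append_word:
  "add_ones q (n + m) (append_word n v w) = append_word n (add_ones q n v) (add_ones q m w)"
  by (auto simp: fun_eq_iff add_ones_def append_word_def)

definition block_code ::
  "nat \<Rightarrow> nat \<Rightarrow> nat \<Rightarrow> (nat \<Rightarrow> nat \<Rightarrow> nat) \<Rightarrow> (nat \<Rightarrow> nat \<Rightarrow> nat \<Rightarrow> nat) \<Rightarrow> nat \<Rightarrow> nat \<Rightarrow> nat" where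
  "block_code q n m G H j = append_word n (G (j div q ^ m)) (H (j div q ^ m) (j mod q ^ m))"

lemma block_index_less:
  fixes q n m j :: nat
  shows "j < q ^ (n + m) \<Longrightarrow> j div q ^ m < q ^ n"
  by (simp add: power_add less_mult_imp_div_less)

lemma block_code_in_words:
  assumes "0 < q" and "j < q ^ (n + m)"
    and "\<And>i. i < q ^ n \<Longrightarrow> G i \<in> words q n"
    and "\<And>i s. i < q ^ n \<Longrightarrow> s < q ^ m \<Longrightarrow> H i s \<in> words q m"
  shows "block_code q n m G H j \<in> words q (n + m)"
  unfolding block_code_def using assms by (simp add: append_word_in_words block_index_less)

lemma inj_on_block_code:
  assumes "0 < q"
    and G_words: "\<And>i. i < q ^ n \<Longrightarrow> G i \<in> words q n"
    and G_inj: "inj_on G {..<q ^ n}"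
    and H_inj: "\<And>i. i < q ^ n \<Longrightarrow> inj_on (H i) {..<q ^ m}"
  shows "inj_on (block_code q n m G H) {..<q ^ (n + m)}"
proof (rule inj_onI)
  let ?M = "q ^ m"
  fix j j'
  assume "j \<in> {..<q ^ (n + m)}" and "j' \<in> {..<q ^ (n + m)}"
    and eq: "block_code q n m G H j = block_code q n m G H j'"
  then have block: "j div ?M < q ^ n" "j' div ?M < q ^ n"
    by (simp_all add: block_index_less)
  have "G (j div ?M) = G (j' div ?M)"
    and H_eq: "H (j div ?M) (j mod ?M) = H (j' div ?M) (j' mod ?M)"
    using append_word_inject[OF G_words G_words eq[unfolded block_code_def]] block by auto
  then have same_block: "j div ?M = j' div ?M"
    using G_inj block by (auto dest: inj_onD)
  moreover have "j mod ?M < ?M" and "j' mod ?M < ?M"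
    using assms(1) by simp_all
  ultimately have "j mod ?M = j' mod ?M"
    using H_inj[OF block(2)] H_eq by (auto dest: inj_onD)
  with same_block show "j = j'"
    by (metis div_mult_mod_eq)
qed

lemma lee_dist_block_code_Suc:
  assumes "0 < q" and j: "Suc j < q ^ (n + m)"
    and G_step: "\<And>i. Suc i < q ^ n \<Longrightarrow> lee_dist q n (G i) (G (Suc i)) = 1"
    and H_step: "\<And>i s. i < q ^ n \<Longrightarrow> Suc s < q ^ m \<Longrightarrow> lee_dist q m (H i s) (H i (Suc s)) = 1"
    and H_link: "\<And>i. Suc i < q ^ n \<Longrightarrow> H i (q ^ m - 1) = H (Suc i) 0"
  shows "lee_dist q (n + m) (block_code q n m G H j) (block_code q n m G H (Suc j)) = 1"
proof (cases "Suc (j mod q ^ m) = q ^ m")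
  case False
  then have "Suc j div q ^ m = j div q ^ m" and "Suc j mod q ^ m = Suc (j mod q ^ m)"
    by (simp_all add: div_Suc mod_Suc)
  moreover have "j mod q ^ m < q ^ m"
    using assms(1) by simp
  with False have "Suc (j mod q ^ m) < q ^ m"
    by simp
  ultimately show ?thesis
    using j H_step block_index_less unfolding block_code_def lee_dist_append_word by simp
next
  case True
  then have next_block: "Suc j div q ^ m = Suc (j div q ^ m)" and "Suc j mod q ^ m = 0"
    and "j mod q ^ m = q ^ m - 1"
    by (simp_all add: div_Suc mod_Suc)
  moreover have next_in_range: "Suc (j div q ^ m) < q ^ n"
    using block_index_less[OF j] next_block by simp
  ultimately show ?thesis
    using G_step[OF next_in_range] H_link[OF next_in_range]
    unfolding block_code_def lee_dist_append_word by simp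
qed

lemma block_code_shift:
  assumes "0 < q" and "0 < n" and j: "j < q ^ (n + m)"
    and G_shift: "\<And>i. i < q ^ n \<Longrightarrow> G ((i + q ^ (n - 1)) mod q ^ n) = add_ones q n (G i)"
    and H_shift: "\<And>i s. i < q ^ n \<Longrightarrow> s < q ^ m \<Longrightarrow>
      H ((i + q ^ (n - 1)) mod q ^ n) s = add_ones q m (H i s)"
  shows "block_code q n m G H ((j + q ^ (n + m - 1)) mod q ^ (n + m)) = add_ones q (n + m) (block_code q n m G H j)"
proof -
  let ?M = "q ^ m"
  let ?j' = "(j + q ^ (n + m - 1)) mod q ^ (n + m)"
  have M: "0 < ?M"
    using assms(1) by simp
  have "q ^ (n + m - 1) = ?M * q ^ (n - 1)" and "q ^ (n + m) = ?M * q ^ n"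
    using assms(2) by (simp_all add: power_add[symmetric] add.commute)
  then have "?j' = ?M * ((j div ?M + q ^ (n - 1)) mod q ^ n) + j mod ?M"
    using add_mult_mod_mult_eq[OF M] by simp
  then have "?j' div ?M = (j div ?M + q ^ (n - 1)) mod q ^ n" and "?j' mod ?M = j mod ?M"
    using M by simp_all
  then show ?thesis
    using G_shift[OF block_index_less[OF j]] H_shift[OF block_index_less[OF j]] M
    unfolding block_code_def by (simp add: add_ones_append_word)
qed

lemma quasi_complementary_lee_gray_codeD:
  assumes "quasi_complementary_lee_gray_code q n G"
  shows "j < q ^ n \<Longrightarrow> G j \<in> words q n"
    and "inj_on G {..<q ^ n}"
    and "Suc j < q ^ n \<Longrightarrow> lee_dist q n (G j) (G (Suc j)) = 1"
    and "j < q ^ n \<Longrightarrow> G ((j + q ^ (n - 1)) mod q ^ n) = add_ones q n (G j)"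
  using assms unfolding quasi_complementary_lee_gray_code_def bij_betw_def by auto

lemma quasi_complementary_block_code:
  assumes q: "0 < q" and n: "0 < n"
    and G: "quasi_complementary_lee_gray_code q n G"
    and H_words: "\<And>i s. i < q ^ n \<Longrightarrow> s < q ^ m \<Longrightarrow> H i s \<in> words q m"
    and H_inj: "\<And>i. i < q ^ n \<Longrightarrow> inj_on (H i) {..<q ^ m}"
    and H_step: "\<And>i s. i < q ^ n \<Longrightarrow> Suc s < q ^ m \<Longrightarrow> lee_dist q m (H i s) (H i (Suc s)) = 1"
    and H_link: "\<And>i. Suc i < q ^ n \<Longrightarrow> H i (q ^ m - 1) = H (Suc i) 0"
    and H_shift: "\<And>i s. i < q ^ n \<Longrightarrow> s < q ^ m \<Longrightarrow>
      H ((i + q ^ (n - 1)) mod q ^ n) s = add_ones q m (H i s)"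
  shows "quasi_complementary_lee_gray_code q (n + m) (block_code q n m G H)"
proof (rule quasi_complementary_lee_gray_codeI)
  note G_facts = quasi_complementary_lee_gray_codeD[OF G]
  show "block_code q n m G H j \<in> words q (n + m)" if "j < q ^ (n + m)" for j
    using q that G_facts(1) H_words by (rule block_code_in_words)
  show "inj_on (block_code q n m G H) {..<q ^ (n + m)}"
    using q G_facts(1,2) H_inj by (rule inj_on_block_code)
  show "lee_dist q (n + m) (block_code q n m G H j) (block_code q n m G H (Suc j)) = 1"
    if "Suc j < q ^ (n + m)" for j
    using q that G_facts(3) H_step H_link by (rule lee_dist_block_code_Suc)
  show "block_code q n m G H ((j + q ^ (n + m - 1)) mod q ^ (n + m))
      = add_ones q (n + m) (block_code q n m G H j)" if "j < q ^ (n + m)" for j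
    using q n that G_facts(4) H_shift by (rule block_code_shift)
qed

section \<open>Integer representatives\<close>

definition residue :: "nat \<Rightarrow> int \<Rightarrow> nat" where
  "residue q x = nat (x mod int q)"

lemma residue_less: "0 < q \<Longrightarrow> residue q x < q"
  unfolding residue_def by (simp add: nat_less_iff)

lemma residue_eq_iff: "0 < q \<Longrightarrow> residue q x = residue q y \<longleftrightarrow> x mod int q = y mod int q"
  unfolding residue_def by (simp add: eq_nat_nat_iff)

lemma residue_add_one:
  assumes "0 < q"
  shows "residue q (x + 1) = (residue q x + 1) mod q"
proof -
  have "int ((residue q x + 1) mod q) = (x mod int q + 1) mod int q"
    using assms unfolding residue_def by (simp add: zmod_int add.commute)
  also have "\<dots> = (x + 1) mod int q"
    by (simp add: mod_add_left_eq)
  finally show ?thesis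
    unfolding residue_def by simp
qed

lemma lee_coord_commute: "lee_coord q a b = lee_coord q b a"
  unfolding lee_coord_def Let_def by simp

lemma lee_coord_residue_add_one:
  assumes "2 \<le> q"
  shows "lee_coord q (residue q x) (residue q (x + 1)) = 1"
proof -
  define a where "a = residue q x"
  have a: "a < q" and succ: "residue q (x + 1) = (a + 1) mod q"
    using assms unfolding a_def by (simp_all add: residue_less residue_add_one)
  show ?thesis
  proof (cases "a + 1 = q")
    case True
    with succ have "residue q (x + 1) = 0" by simp
    with True assms show ?thesis unfolding a_def[symmetric] lee_coord_def Let_def by simp
  next
    case False
    with a succ have "residue q (x + 1) = a + 1" by simp
    with assms show ?thesis unfolding a_def[symmetric] lee_coord_def Let_def by simp
  qed
qed

lemma lee_coord_residue_diff_one: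
  "2 \<le> q \<Longrightarrow> lee_coord q (residue q x) (residue q (x - 1)) = 1"
  using lee_coord_residue_add_one[of q "x - 1"] by (simp add: lee_coord_commute)

text \<open>An integer pair stands for the element of Z_q^2 it reduces to; integer coordinates keep
  translations and the quarter turn below free of truncated subtraction.\<close>

definition pair_word :: "nat \<Rightarrow> int \<times> int \<Rightarrow> nat \<Rightarrow> nat" where
  "pair_word q u p = (if p = 0 then residue q (fst u) else if p = 1 then residue q (snd u) else 0)"

lemma pair_word_in_words: "0 < q \<Longrightarrow> pair_word q u \<in> words q 2"
  unfolding words_def pair_word_def by (simp add: residue_less)

lemma pair_word_eq_iff:
  assumes "0 < q"
  shows "pair_word q u = pair_word q v \<longleftrightarrow>
    fst u mod int q = fst v mod int q \<and> snd u mod int q = snd v mod int q"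
proof
  assume "pair_word q u = pair_word q v"
  from fun_cong[OF this, of 0] fun_cong[OF this, of 1]
  show "fst u mod int q = fst v mod int q \<and> snd u mod int q = snd v mod int q"
    using assms unfolding pair_word_def by (simp add: residue_eq_iff)
qed (simp add: fun_eq_iff pair_word_def residue_def)

lemma pair_word_add_cong:
  assumes "0 < q" and "pair_word q u = pair_word q v"
  shows "pair_word q (c + u) = pair_word q (c + v)"
  using assms unfolding pair_word_eq_iff[OF assms(1)] by (auto intro: mod_add_cong)

lemma pair_word_add_multiple: "pair_word q (u + (int q * a, int q * b)) = pair_word q u"
  by (simp add: fun_eq_iff pair_word_def residue_def)

lemma add_ones_pair_word:
  assumes "0 < q"
  shows "add_ones q 2 (pair_word q u) = pair_word q (u + (1, 1))"
proof
  fix p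
  show "add_ones q 2 (pair_word q u) p = pair_word q (u + (1, 1)) p"
    using assms by (simp add: add_ones_def pair_word_def residue_add_one)
qed

lemma lee_dist_two: "lee_dist q 2 v w = lee_coord q (v 0) (w 0) + lee_coord q (v 1) (w 1)"
  unfolding lee_dist_def by (simp add: numeral_2_eq_2)

definition lee_units :: "(int \<times> int) set" where
  "lee_units = {(1, 0), (-1, 0), (0, 1), (0, -1)}"

lemma lee_dist_pair_word_unit:
  assumes "2 \<le> q" and "e \<in> lee_units"
  shows "lee_dist q 2 (pair_word q u) (pair_word q (u + e)) = 1"
  using assms(2) unfolding lee_units_def lee_dist_two pair_word_def
  by (auto simp: lee_coord_residue_add_one[OF assms(1)] lee_coord_residue_diff_one[OF assms(1)])

section \<open>Lee walks through Z_q^2\<close>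

definition lee_walk :: "nat \<Rightarrow> nat \<Rightarrow> (nat \<Rightarrow> int \<times> int) \<Rightarrow> bool" where
  "lee_walk q N f \<longleftrightarrow> inj_on (pair_word q \<circ> f) {..<N} \<and>
     (\<forall>s. Suc s < N \<longrightarrow> (\<exists>e\<in>lee_units. pair_word q (f (Suc s)) = pair_word q (f s + e)))"

lemma lee_walk_lee_dist:
  assumes "2 \<le> q" and "lee_walk q N f" and "Suc s < N"
  shows "lee_dist q 2 (pair_word q (f s)) (pair_word q (f (Suc s))) = 1"
proof -
  obtain e where "e \<in> lee_units" and "pair_word q (f (Suc s)) = pair_word q (f s + e)"
    using assms(2,3) unfolding lee_walk_def by blast
  then show ?thesis
    using lee_dist_pair_word_unit[OF assms(1)] by simp
qed

lemma lee_walk_translate: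
  assumes q: "0 < q" and f: "lee_walk q N f"
  shows "lee_walk q N (\<lambda>s. c + f s)"
  unfolding lee_walk_def
proof (intro conjI allI impI)
  show "inj_on (pair_word q \<circ> (\<lambda>s. c + f s)) {..<N}"
  proof (rule inj_onI)
    fix s s'
    assume s: "s \<in> {..<N}" "s' \<in> {..<N}"
      and "(pair_word q \<circ> (\<lambda>s. c + f s)) s = (pair_word q \<circ> (\<lambda>s. c + f s)) s'"
    then have "(pair_word q \<circ> f) s = (pair_word q \<circ> f) s'"
      using pair_word_add_cong[OF q, of "c + f s" "c + f s'" "- c"] by simp
    with f s show "s = s'"
      unfolding lee_walk_def by (blast dest: inj_onD)
  qed
next
  fix s
  assume "Suc s < N"
  then obtain e where e: "e \<in> lee_units" and step: "pair_word q (f (Suc s)) = pair_word q (f s + e)"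
    using f unfolding lee_walk_def by blast
  from step have "pair_word q (c + f (Suc s)) = pair_word q (c + (f s + e))"
    by (rule pair_word_add_cong[OF q])
  with e show "\<exists>e\<in>lee_units. pair_word q (c + f (Suc s)) = pair_word q (c + f s + e)"
    by (metis add.assoc)
qed

definition quarter_turn :: "int \<times> int \<Rightarrow> int \<times> int" where
  "quarter_turn u = (snd u, - fst u)"

lemma quarter_turn_zero [simp]: "quarter_turn 0 = 0"
  unfolding quarter_turn_def by (simp add: zero_prod_def)

lemma quarter_turn_add: "quarter_turn (u + v) = quarter_turn u + quarter_turn v"
  unfolding quarter_turn_def by simp

lemma quarter_turn_lee_units: "e \<in> lee_units \<Longrightarrow> quarter_turn e \<in> lee_units"
  unfolding lee_units_def quarter_turn_def by auto

lemma pair_word_quarter_turn_eq_iff: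
  assumes "0 < q"
  shows "pair_word q (quarter_turn u) = pair_word q (quarter_turn v) \<longleftrightarrow> pair_word q u = pair_word q v"
proof -
  have "(- x) mod int q = (- y) mod int q \<longleftrightarrow> x mod int q = y mod int q" for x y :: int
    using mod_minus_cong[of x "int q" y] mod_minus_cong[of "- x" "int q" "- y"] by auto
  then show ?thesis
    unfolding pair_word_eq_iff[OF assms] quarter_turn_def by auto
qed

lemma lee_walk_quarter_turn:
  assumes q: "0 < q" and f: "lee_walk q N f"
  shows "lee_walk q N (quarter_turn \<circ> f)"
  unfolding lee_walk_def
proof (intro conjI allI impI)
  show "inj_on (pair_word q \<circ> (quarter_turn \<circ> f)) {..<N}"
    using f unfolding lee_walk_def inj_on_def by (simp add: pair_word_quarter_turn_eq_iff[OF q])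
next
  fix s
  assume "Suc s < N"
  then obtain e where e: "e \<in> lee_units" and step: "pair_word q (f (Suc s)) = pair_word q (f s + e)"
    using f unfolding lee_walk_def by blast
  from step have "pair_word q (quarter_turn (f (Suc s))) = pair_word q (quarter_turn (f s) + quarter_turn e)"
    by (simp add: pair_word_quarter_turn_eq_iff[OF q] quarter_turn_add[symmetric])
  with quarter_turn_lee_units[OF e]
  show "\<exists>e\<in>lee_units. pair_word q ((quarter_turn \<circ> f) (Suc s)) = pair_word q ((quarter_turn \<circ> f) s + e)"
    by auto
qed

definition snake :: "nat \<Rightarrow> nat \<Rightarrow> int \<times> int" where
  "snake q s = (int (s div q), int (s div q) - int (s mod q))"

lemma snake_0 [simp]: "snake q 0 = 0"
  unfolding snake_def by (simp add: zero_prod_def)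

lemma snake_Suc:
  assumes "0 < q"
  shows "snake q (Suc s) = snake q s + (if Suc s mod q = 0 then (1, int q) else (0, -1))"
proof (cases "Suc s mod q = 0")
  case True
  then have "Suc (s mod q) = q"
    by (simp add: mod_Suc split: if_splits)
  moreover have "Suc s div q = Suc (s div q)"
    using True by (simp add: div_Suc)
  ultimately show ?thesis
    using True unfolding snake_def by simp
next
  case False
  then have "Suc s mod q = Suc (s mod q)" and "Suc s div q = s div q"
    by (simp_all add: mod_Suc div_Suc split: if_splits)
  with False show ?thesis
    unfolding snake_def by simp
qed

lemma snake_inj:
  assumes q: "0 < q" and s: "s < q\<^sup>2" "s' < q\<^sup>2"
    and eq: "pair_word q (snake q s) = pair_word q (snake q s')"
  shows "s = s'"
proof -
  have row: "s div q < q" "s' div q < q"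
    using s by (simp_all add: power2_eq_square less_mult_imp_div_less)
  have "int (s div q) mod int q = int (s' div q) mod int q"
    using eq unfolding pair_word_eq_iff[OF q] snake_def by simp
  with row have same_row: "s div q = s' div q"
    by (simp add: zmod_int)
  have "(int (s div q) - int (s mod q)) mod int q = (int (s div q) - int (s' mod q)) mod int q"
    using eq same_row unfolding pair_word_eq_iff[OF q] snake_def by simp
  then have "(int (s div q) - (int (s div q) - int (s mod q))) mod int q
      = (int (s div q) - (int (s div q) - int (s' mod q))) mod int q"
    by (rule mod_diff_cong[OF refl])
  then have "s mod q = s' mod q"
    using q by simp
  with same_row show ?thesis
    by (metis div_mult_mod_eq)
qed

lemma lee_walk_snake:
  assumes q: "0 < q"
  shows "lee_walk q (q\<^sup>2) (snake q)"
  unfolding lee_walk_def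
proof
  show "inj_on (pair_word q \<circ> snake q) {..<q\<^sup>2}"
    using snake_inj[OF q] by (auto intro: inj_onI)
  have "pair_word q (snake q (Suc s)) = pair_word q (snake q s + (1, 0))" if "Suc s mod q = 0" for s
  proof -
    have "snake q (Suc s) = (snake q s + (1, 0)) + (int q * 0, int q * 1)"
      using that by (simp add: snake_Suc[OF q] add.assoc)
    then show ?thesis
      by (simp only: pair_word_add_multiple)
  qed
  then show "\<forall>s. Suc s < q\<^sup>2 \<longrightarrow> (\<exists>e\<in>lee_units. pair_word q (snake q (Suc s)) = pair_word q (snake q s + e))"
    unfolding lee_units_def by (auto simp: snake_Suc[OF q])
qed

lemma snake_last:
  assumes "0 < q"
  shows "pair_word q (snake q (q\<^sup>2 - 1)) = pair_word q (-1, 0)"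
proof -
  obtain p where p: "q = Suc p"
    using assms by (cases q) auto
  have "q\<^sup>2 - 1 = p + q * p"
    unfolding p by (simp add: power2_eq_square)
  moreover have "p < q"
    using p by simp
  ultimately have "(q\<^sup>2 - 1) div q = p" and "(q\<^sup>2 - 1) mod q = p"
    by simp_all
  then have "snake q (q\<^sup>2 - 1) = (-1, 0) + (int q * 1, int q * 0)"
    unfolding snake_def p by simp
  then show ?thesis
    by (simp only: pair_word_add_multiple)
qed

lemma shifted_block_index:
  fixes q n i :: nat
  assumes q: "0 < q" and n: "0 < n"
  shows "(i + q ^ (n - 1)) mod q ^ n div q ^ (n - 1) = (i div q ^ (n - 1) + 1) mod q"
    and "(i + q ^ (n - 1)) mod q ^ n mod q ^ (n - 1) = i mod q ^ (n - 1)"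
proof -
  have "q ^ n = q ^ (n - 1) * q"
    by (rule power_minus_mult[OF n, symmetric])
  then have "(i + q ^ (n - 1)) mod q ^ n = q ^ (n - 1) * ((i div q ^ (n - 1) + 1) mod q) + i mod q ^ (n - 1)"
    using add_mult_mod_mult_eq[of "q ^ (n - 1)" i 1 q] q by simp
  then show "(i + q ^ (n - 1)) mod q ^ n div q ^ (n - 1) = (i div q ^ (n - 1) + 1) mod q"
    and "(i + q ^ (n - 1)) mod q ^ n mod q ^ (n - 1) = i mod q ^ (n - 1)"
    using q by simp_all
qed

lemma snake_shift:
  assumes q: "0 < q"
  shows "pair_word q (snake q ((s + q) mod q\<^sup>2)) = pair_word q (snake q s + (1, 1))"
proof -
  have row: "(s + q) mod q\<^sup>2 div q = (s div q + 1) mod q"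
    and col: "(s + q) mod q\<^sup>2 mod q = s mod q"
    using shifted_block_index[OF q, of 2 s] by simp_all
  have next_row: "int ((s div q + 1) mod q) mod int q = (int (s div q) + 1) mod int q"
    by (simp add: zmod_int add.commute)
  show ?thesis
    unfolding pair_word_eq_iff[OF q] snake_def row col
    using next_row mod_diff_cong[OF next_row refl, of "int (s mod q)"]
    by (simp add: algebra_simps)
qed

lemma quasi_complementary_snake:
  assumes "2 \<le> q"
  shows "quasi_complementary_lee_gray_code q 2 (pair_word q \<circ> snake q)"
proof (rule quasi_complementary_lee_gray_codeI)
  have q: "0 < q"
    using assms by simp
  show "(pair_word q \<circ> snake q) j \<in> words q 2" for j
    using pair_word_in_words[OF q] by simp
  show "inj_on (pair_word q \<circ> snake q) {..<q ^ 2}"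
    using lee_walk_snake[OF q] unfolding lee_walk_def by blast
  show "lee_dist q 2 ((pair_word q \<circ> snake q) j) ((pair_word q \<circ> snake q) (Suc j)) = 1"
    if "Suc j < q ^ 2" for j
    using lee_walk_lee_dist[OF assms lee_walk_snake[OF q] that] by simp
  show "(pair_word q \<circ> snake q) ((j + q ^ (2 - 1)) mod q ^ 2) = add_ones q 2 ((pair_word q \<circ> snake q) j)"
    for j
    using snake_shift[OF q] by (simp add: add_ones_pair_word[OF q])
qed

section \<open>Adding two coordinates\<close>

text \<open>The snake ends at (-1, 0) and its quarter turn at (0, 1) modulo q. Accordingly the offset
  moves by (-1, 0) from one block to the next, except after every q^(n-1)-th block, where the
  turned snake is used and the offset moves by (0, 1). Adding q^(n-1) to the block index adds
  (1, 1) to the offset modulo q, because q divides q^(n-1) when n is at least 2.\<close>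

definition block_offset :: "nat \<Rightarrow> nat \<Rightarrow> nat \<Rightarrow> int \<times> int" where
  "block_offset q n i = (int (i div q ^ (n - 1)) - int i, int (i div q ^ (n - 1)))"

definition block_walk :: "nat \<Rightarrow> nat \<Rightarrow> nat \<Rightarrow> nat \<Rightarrow> int \<times> int" where
  "block_walk q n i s = block_offset q n i +
     (if Suc i mod q ^ (n - 1) = 0 then quarter_turn (snake q s) else snake q s)"

lemma lee_walk_block_walk:
  assumes q: "0 < q"
  shows "lee_walk q (q\<^sup>2) (block_walk q n i)"
proof (cases "Suc i mod q ^ (n - 1) = 0")
  case True
  have "lee_walk q (q\<^sup>2) (\<lambda>s. block_offset q n i + (quarter_turn \<circ> snake q) s)"
    by (intro lee_walk_translate lee_walk_quarter_turn lee_walk_snake q)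
  with True show ?thesis
    by (simp add: block_walk_def[abs_def])
next
  case False
  have "lee_walk q (q\<^sup>2) (\<lambda>s. block_offset q n i + snake q s)"
    by (intro lee_walk_translate lee_walk_snake q)
  with False show ?thesis
    by (simp add: block_walk_def[abs_def])
qed

lemma block_offset_Suc:
  "block_offset q n (Suc i) =
     block_offset q n i + (if Suc i mod q ^ (n - 1) = 0 then (0, 1) else (-1, 0))"
  unfolding block_offset_def by (simp add: div_Suc)

lemma block_walk_link:
  assumes q: "0 < q"
  shows "pair_word q (block_walk q n i (q\<^sup>2 - 1)) = pair_word q (block_walk q n (Suc i) 0)"
proof -
  let ?turn = "Suc i mod q ^ (n - 1) = 0"
  have "pair_word q (if ?turn then quarter_turn (snake q (q\<^sup>2 - 1)) else snake q (q\<^sup>2 - 1))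
      = pair_word q (if ?turn then quarter_turn (-1, 0) else (-1, 0))"
    using snake_last[OF q] pair_word_quarter_turn_eq_iff[OF q] by simp
  then have "pair_word q (block_walk q n i (q\<^sup>2 - 1))
      = pair_word q (block_offset q n i + (if ?turn then (0, 1) else (-1, 0)))"
    unfolding block_walk_def by (auto simp: quarter_turn_def intro: pair_word_add_cong[OF q])
  then show ?thesis
    by (simp add: block_walk_def block_offset_Suc)
qed

lemma block_offset_shift:
  assumes q: "0 < q" and n: "2 \<le> n"
  shows "pair_word q (block_offset q n ((i + q ^ (n - 1)) mod q ^ n)) = pair_word q (block_offset q n i + (1, 1))"
proof -
  define Q where "Q = q ^ (n - 1)"
  define i' where "i' = (i + Q) mod q ^ n"
  have top: "int (i' div Q) mod int q = (int (i div Q) + 1) mod int q"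
    using shifted_block_index(1)[OF q, of n i] n unfolding Q_def i'_def by (simp add: zmod_int add.commute)
  have "q dvd Q"
    using n unfolding Q_def by (simp add: dvd_power)
  moreover have "i' mod Q mod q = i mod Q mod q"
    using shifted_block_index(2)[OF q, of n i] n unfolding Q_def i'_def by simp
  ultimately have "i' mod q = i mod q"
    by (simp add: mod_mod_cancel)
  then have low: "int i' mod int q = int i mod int q"
    unfolding zmod_int[symmetric] by simp
  have "pair_word q (block_offset q n i') = pair_word q (block_offset q n i + (1, 1))"
    unfolding pair_word_eq_iff[OF q] block_offset_def Q_def[symmetric]
    using top mod_diff_cong[OF top low] by (simp add: algebra_simps)
  then show ?thesis
    unfolding i'_def Q_def .
qed

lemma block_walk_shift:
  assumes q: "0 < q" and n: "2 \<le> n"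
  shows "pair_word q (block_walk q n ((i + q ^ (n - 1)) mod q ^ n) s) = pair_word q (block_walk q n i s + (1, 1))"
proof -
  let ?i' = "(i + q ^ (n - 1)) mod q ^ n"
  have "Suc ?i' mod q ^ (n - 1) = Suc (?i' mod q ^ (n - 1)) mod q ^ (n - 1)"
    by (simp add: mod_Suc_eq)
  also have "\<dots> = Suc i mod q ^ (n - 1)"
    using shifted_block_index(2)[OF q, of n i] n by (simp add: mod_Suc_eq)
  finally show ?thesis
    using pair_word_add_cong[OF q block_offset_shift[OF q n, of i]]
    unfolding block_walk_def by (simp add: ac_simps)
qed

definition extend_code :: "nat \<Rightarrow> nat \<Rightarrow> (nat \<Rightarrow> nat \<Rightarrow> nat) \<Rightarrow> nat \<Rightarrow> nat \<Rightarrow> nat" where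
  "extend_code q n G = block_code q n 2 G (\<lambda>i s. pair_word q (block_walk q n i s))"

lemma quasi_complementary_extend_code:
  assumes q: "2 \<le> q" and n: "2 \<le> n" and G: "quasi_complementary_lee_gray_code q n G"
  shows "quasi_complementary_lee_gray_code q (n + 2) (extend_code q n G)"
proof -
  have q0: "0 < q"
    using q by simp
  have walk: "lee_walk q (q\<^sup>2) (block_walk q n i)" for i
    by (rule lee_walk_block_walk[OF q0])
  then have "inj_on (\<lambda>s. pair_word q (block_walk q n i s)) {..<q\<^sup>2}" for i
    unfolding lee_walk_def comp_def by blast
  moreover have "lee_dist q 2 (pair_word q (block_walk q n i s)) (pair_word q (block_walk q n i (Suc s))) = 1"
    if "Suc s < q\<^sup>2" for i s
    by (rule lee_walk_lee_dist[OF q walk that])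
  moreover have "pair_word q (block_walk q n ((i + q ^ (n - 1)) mod q ^ n) s)
      = add_ones q 2 (pair_word q (block_walk q n i s))" for i s
    using block_walk_shift[OF q0 n] by (simp add: add_ones_pair_word[OF q0])
  moreover have "pair_word q (block_walk q n i (q\<^sup>2 - 1)) = pair_word q (block_walk q n (Suc i) 0)" for i
    by (rule block_walk_link[OF q0])
  ultimately show ?thesis
    unfolding extend_code_def
    by (intro quasi_complementary_block_code[OF q0 _ G])
       (use n in \<open>simp_all add: pair_word_in_words[OF q0]\<close>)
qed

theorem corollary1:
  fixes q n :: nat
  assumes "q \<ge> 3" and "n > 0" and "even n"
  shows "\<exists>G. quasi_complementary_lee_gray_code q n G"
proof -
  have q: "2 \<le> q"
    using assms(1) by simp
  obtain m where "n = 2 * m"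
    using assms(3) by (rule evenE)
  with assms(2) obtain k where n: "n = 2 * Suc k"
    by (cases m) auto
  have "\<exists>G. quasi_complementary_lee_gray_code q (2 * Suc k) G"
  proof (induction k)
    case 0
    show ?case
      using quasi_complementary_snake[OF q] by auto
  next
    case (Suc k)
    then obtain G where G: "quasi_complementary_lee_gray_code q (2 * Suc k) G"
      by blast
    have "quasi_complementary_lee_gray_code q (2 * Suc k + 2) (extend_code q (2 * Suc k) G)"
      using quasi_complementary_extend_code[OF q _ G] by simp
    moreover have "2 * Suc (Suc k) = 2 * Suc k + 2"
      by simp
    ultimately show ?case
      by metis
  qed
  with n show ?thesis
    by simp
qed

end
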